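(* In the Baxter monoid ${\mathsf{baxt}}$, the relation $\sim_o$ coincides with $\equiv_{\mathrm{ev}}$: for $s,t\in{\mathsf{baxt}}$, there exist $g,h\in{\mathsf{baxt}}$ with $sg=gt$ and $hs=th$ if and only if $s$ and $t$ have the same evaluation.
   Context: Let $\mathcal{A}=\{1<2<3<\cdots\}$ be the ordered alphabet of positive integers. For a monoid $M$ and $x,y\in M$, write $x\sim_o y$ iff there exist $g,h\in M$ with $xg=gy$ and $hx=yh$. The evaluation of a word $w$ is the tuple $(|w|_a)_{a}$ giving the number of occurrences of each letter $a$; the monoid below is defined by evaluation-preserving relations, so the evaluation of an element is well defined, and $s\equiv_{\mathrm{ev}} t$ means $s$ and $t$ have the same evaluation. The Baxter monoid ${\mathsf{baxt}}$ is $\mathcal{A}^*$ modulo the congruence generated by the relations $cudavb=cuadvb$ for letters $a\le b<c\le d$ and words $u,v\in\mathcal{A}^*$, and $budavc=buadvc$ for letters $a<b\le c<d$ and words $u,v\in\mathcal{A}^*$. (A known fact that may be used: if $p,q\in\mathcal{A}^*$ have the same evaluation then $ppq=pqq$ and $qpp=qqp$ in ${\mathsf{baxt}}$.) *)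

theory Defs
  imports Main
begin

definition is_word :: "nat list \<Rightarrow> bool" where
  "is_word w \<longleftrightarrow> (\<forall>a\<in>set w. 0 < a)"

inductive baxt_step :: "nat list \<Rightarrow> nat list \<Rightarrow> bool" where
  rel1: "a \<le> b \<Longrightarrow> b < c \<Longrightarrow> c \<le> d \<Longrightarrow>
     baxt_step (c # u @ [d, a] @ v @ [b]) (c # u @ [a, d] @ v @ [b])"
| rel2: "a < b \<Longrightarrow> b \<le> c \<Longrightarrow> c < d \<Longrightarrow>
     baxt_step (b # u @ [d, a] @ v @ [c]) (b # u @ [a, d] @ v @ [c])"

inductive baxt_eq :: "nat list \<Rightarrow> nat list \<Rightarrow> bool" where
  step: "baxt_step x y \<Longrightarrow> baxt_eq (p @ x @ q) (p @ y @ q)"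
| refl: "baxt_eq x x"
| sym: "baxt_eq x y \<Longrightarrow> baxt_eq y x"
| trans: "baxt_eq x y \<Longrightarrow> baxt_eq y z \<Longrightarrow> baxt_eq x z"

definition ev :: "nat list \<Rightarrow> nat \<Rightarrow> nat" where
  "ev w a = count_list w a"

end

theory Submission
  imports Defs "HOL-Library.Multiset"
begin

text \<open>The relations preserve the multiset of letters, so \<open>s g = g t\<close> already forces
  \<open>s\<close> and \<open>t\<close> to have the same evaluation. Conversely, the first relation with
  \<open>a = b\<close> and \<open>c = d\<close> swaps two adjacent letters \<open>d a\<close> with \<open>a < d\<close> as soon as a
  copy of \<open>d\<close> occurs somewhere to the left and a copy of \<open>a\<close> somewhere to the right.
  Hence a factor \<open>m\<close> of \<open>L m R\<close> may be permuted arbitrarily whenever all its letters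
  occur both in \<open>L\<close> and in \<open>R\<close>. For \<open>s, t\<close> of equal evaluation this gives
  \<open>s s t = s t t\<close> and \<open>t s s = t t s\<close>, i.e. \<open>g = s t\<close> and \<open>h = t s\<close> conjugate.\<close>

lemmas [trans] = baxt_eq.trans

lemma ev_eq_iff_mset_eq: "ev s = ev t \<longleftrightarrow> mset s = mset t"
  unfolding ev_def by (metis count_mset multiset_eqI)

lemma baxt_step_mset_eq: "baxt_step x y \<Longrightarrow> mset x = mset y"
  by (induction rule: baxt_step.induct) (simp_all add: union_ac)

lemma baxt_eq_mset_eq: "baxt_eq x y \<Longrightarrow> mset x = mset y"
  by (induction rule: baxt_eq.induct) (auto dest: baxt_step_mset_eq)

lemma baxt_eq_swap_descent:
  assumes "y < x" "x \<in> set L" "y \<in> set R"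
  shows "baxt_eq (L @ [x, y] @ R) (L @ [y, x] @ R)"
proof -
  obtain L1 L2 where L: "L = L1 @ x # L2" using assms(2) by (metis split_list)
  obtain R1 R2 where R: "R = R1 @ y # R2" using assms(3) by (metis split_list)
  have "baxt_step (x # L2 @ [x, y] @ R1 @ [y]) (x # L2 @ [y, x] @ R1 @ [y])"
    using assms(1) by (intro baxt_step.rel1) auto
  from baxt_eq.step[OF this, of L1 R2] show ?thesis by (simp add: L R)
qed

lemma baxt_eq_swap_adjacent:
  assumes "max x y \<in> set L" "min x y \<in> set R"
  shows "baxt_eq (L @ [x, y] @ R) (L @ [y, x] @ R)"
proof (cases x y rule: linorder_cases)
  case less
  then show ?thesis
    using baxt_eq_swap_descent[of x y L R] assms by (auto intro: baxt_eq.sym)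
next
  case equal
  then show ?thesis by (simp add: baxt_eq.refl)
next
  case greater
  then show ?thesis using baxt_eq_swap_descent[of y x L R] assms by auto
qed

lemma baxt_eq_move_letter_left:
  assumes "set (x # A) \<subseteq> set L" "set (x # A) \<subseteq> set R"
  shows "baxt_eq (L @ A @ [x] @ R) (L @ [x] @ A @ R)"
  using assms
proof (induction A arbitrary: L)
  case Nil
  then show ?case by (simp add: baxt_eq.refl)
next
  case (Cons a A)
  have "baxt_eq (L @ (a # A) @ [x] @ R) (L @ [a, x] @ A @ R)"
    using Cons.IH[of "L @ [a]"] Cons.prems by auto
  also have "baxt_eq \<dots> (L @ [x, a] @ A @ R)"
    using Cons.prems by (intro baxt_eq_swap_adjacent) (auto simp: max_def min_def)
  finally show ?case by simp
qed

lemma baxt_eq_permute_factor: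
  assumes "mset m = mset m'" "set m \<subseteq> set L" "set m \<subseteq> set R"
  shows "baxt_eq (L @ m @ R) (L @ m' @ R)"
  using assms
proof (induction m arbitrary: m' L)
  case Nil
  then show ?case by (simp add: baxt_eq.refl)
next
  case (Cons x m)
  have set_m': "set m' = set (x # m)" using Cons.prems(1) by (metis set_mset_mset)
  then obtain A B where m': "m' = A @ x # B" by (metis list.set_intros(1) split_list)
  have "baxt_eq (L @ (x # m) @ R) (L @ [x] @ A @ B @ R)"
    using Cons.IH[of "A @ B" "L @ [x]"] Cons.prems m' by auto
  also have "baxt_eq \<dots> (L @ A @ [x] @ B @ R)"
  proof (rule baxt_eq.sym)
    show "baxt_eq (L @ A @ [x] @ B @ R) (L @ [x] @ A @ B @ R)"
      using Cons.prems set_m' m' by (intro baxt_eq_move_letter_left) auto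
  qed
  finally show ?case by (simp add: m')
qed

theorem mainTheorem10:
  assumes "is_word s" and "is_word t"
  shows "(\<exists>g h. is_word g \<and> is_word h \<and>
            baxt_eq (s @ g) (g @ t) \<and> baxt_eq (h @ s) (t @ h))
         \<longleftrightarrow> ev s = ev t"
proof
  assume "\<exists>g h. is_word g \<and> is_word h \<and>
            baxt_eq (s @ g) (g @ t) \<and> baxt_eq (h @ s) (t @ h)"
  then obtain g where "baxt_eq (s @ g) (g @ t)" by blast
  then show "ev s = ev t"
    by (auto dest: baxt_eq_mset_eq simp: ev_eq_iff_mset_eq)
next
  assume "ev s = ev t"
  then have mset_st: "mset s = mset t" by (simp add: ev_eq_iff_mset_eq)
  then have "set s = set t" by (metis set_mset_mset)
  then have "baxt_eq (s @ (s @ t)) ((s @ t) @ t)" "baxt_eq ((t @ s) @ s) (t @ (t @ s))"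
    using baxt_eq_permute_factor[OF mset_st, of s t]
      baxt_eq_permute_factor[OF mset_st, of t s] by auto
  moreover have "is_word (s @ t)" "is_word (t @ s)"
    using assms by (auto simp: is_word_def)
  ultimately show "\<exists>g h. is_word g \<and> is_word h \<and>
            baxt_eq (s @ g) (g @ t) \<and> baxt_eq (h @ s) (t @ h)" by blast
qed

end
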